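(* Let $(\mathcal{L}\subset\mathbb{R}^s,\mathbb{R}^n)$ be a generic cut-and-project scheme, let $L\in\mathbb{R}^{s\times s}$ be a matrix associated to $\mathcal{L}$, and let $\Sigma(\Omega)\subset\mathbb{R}^n$ be a cut-and-project set constructed from this scheme. If $A:\mathbb{R}^n\to\mathbb{R}^n$ is a linear map with $A\Sigma(\Omega)\subset\Sigma(\Omega)$, then $A\pi_\parallel(\mathcal{L})\subset\pi_\parallel(\mathcal{L})$ and there exist uniquely defined matrices $C\in\mathbb{Z}^{s\times s}$ and $B\in\mathbb{R}^{(s-n)\times(s-n)}$ such that $\begin{pmatrix}A&O\\O&B\end{pmatrix}L=LC$.
   Context: A lattice $\mathcal{L}\subset\mathbb{R}^s$ is $\{L\mathbf{r}:\mathbf{r}\in\mathbb{Z}^s\}$ for a non-singular $L\in\mathbb{R}^{s\times s}$ (a matrix associated to $\mathcal{L}$). For $1\le n<s$, the cut-and-project scheme $(\mathcal{L}\subset\mathbb{R}^s,\mathbb{R}^n)$ consists of $\mathcal{L}$ with projections $\pi_\parallel(\mathbf{x})=(x_1,\dots,x_n)^\top$, $\pi_\perp(\mathbf{x})=(x_{n+1},\dots,x_s)^\top$; it is generic if $\pi_\parallel|_{\mathcal{L}}$ and $\pi_\perp|_{\mathcal{L}}$ are injective and $\pi_\perp(\mathcal{L})$ is dense in $\mathbb{R}^{s-n}$. For a bounded $\Omega\subset\mathbb{R}^{s-n}$ with $\overline{\Omega^\circ}=\overline{\Omega}\neq\emptyset$, the cut-and-project set is $\Sigma(\Omega)=\{\pi_\parallel(\mathbf{l}):\mathbf{l}\in\mathcal{L},\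 \pi_\perp(\mathbf{l})\in\Omega\}$. *)

theory Defs
  imports "HOL-Analysis.Analysis"
begin

text \<open>R^s is modelled as real^('n::finite + 'm::finite) with n = CARD('n) and s - n = CARD('m);
  coordinates Inl i are the first n coordinates, Inr j the last s - n.\<close>

definition int_vectors :: "(real ^ 'k) set" where
  "int_vectors = {r. \<forall>i. r $ i \<in> \<int>}"

definition lattice_of :: "real ^ 'k ^ 'k \<Rightarrow> (real ^ 'k) set" where
  "lattice_of L = {L *v r | r. r \<in> int_vectors}"

definition pi_par :: "real ^ ('n::finite + 'm::finite) \<Rightarrow> real ^ 'n" where
  "pi_par x = (\<chi> i. x $ Inl i)"

definition pi_perp :: "real ^ ('n::finite + 'm::finite) \<Rightarrow> real ^ 'm" where
  "pi_perp x = (\<chi> j. x $ Inr j)"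

definition generic_cps :: "real ^ ('n::finite + 'm::finite) ^ ('n + 'm) \<Rightarrow> bool" where
  "generic_cps L \<longleftrightarrow>
     invertible L \<and>
     inj_on (pi_par :: real ^ ('n::finite + 'm::finite) \<Rightarrow> real ^ 'n) (lattice_of L) \<and>
     inj_on (pi_perp :: real ^ ('n::finite + 'm::finite) \<Rightarrow> real ^ 'm) (lattice_of L) \<and>
     closure ((pi_perp :: real ^ ('n::finite + 'm::finite) \<Rightarrow> real ^ 'm) ` lattice_of L) = UNIV"

definition cps_set :: "real ^ ('n::finite + 'm::finite) ^ ('n + 'm) \<Rightarrow> (real ^ 'm) set \<Rightarrow> (real ^ 'n) set" where
  "cps_set L \<Omega> = {pi_par l | l. l \<in> lattice_of L \<and> pi_perp l \<in> \<Omega>}"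

definition block_diag :: "real ^ 'n ^ 'n \<Rightarrow> real ^ 'm ^ 'm \<Rightarrow> real ^ ('n::finite + 'm::finite) ^ ('n + 'm)" where
  "block_diag A B = (\<chi> i j. case i of
      Inl a \<Rightarrow> (case j of Inl b \<Rightarrow> A $ a $ b | Inr _ \<Rightarrow> 0)
    | Inr a \<Rightarrow> (case j of Inl _ \<Rightarrow> 0 | Inr b \<Rightarrow> B $ a $ b))"

end

theory Submission
  imports Defs
begin

text \<open>Lattice points whose internal component is smaller than half the radius of a ball
  inside \<Omega> are differences of two lattice points over \<Sigma>(\<Omega>), because pi_perp of the
  lattice is dense; so A maps their projections into pi_par of the lattice. By density again,
  every lattice point is a + k b with a, b of small internal component, hence A preserves
  pi_par of the lattice, which yields the integer matrix C column by column. The linear map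
  z \<mapsto> pi_perp (L C z) sends lattice points with internal component in \<Omega> to such points, so
  it is bounded on lattice points with small, hence with bounded, internal component.
  Approximating the multiples N x of a vector with pi_perp (L x) = 0 by lattice points then
  forces pi_perp (L C x) = 0, so this map factors as B \<circ> pi_perp \<circ> L. Uniqueness comes from
  the injectivity of pi_par on the lattice and the surjectivity of pi_perp \<circ> L.\<close>

definition add_subgroup :: "'a::ab_group_add set \<Rightarrow> bool" where
  "add_subgroup S \<longleftrightarrow> 0 \<in> S \<and> (\<forall>x\<in>S. \<forall>y\<in>S. x - y \<in> S)"

lemma add_subgroup_diff: "add_subgroup S \<Longrightarrow> x \<in> S \<Longrightarrow> y \<in> S \<Longrightarrow> x - y \<in> S"
  by (simp add: add_subgroup_def)

lemma add_subgroup_add: "add_subgroup S \<Longrightarrow> x \<in> S \<Longrightarrow> y \<in> S \<Longrightarrow> x + y \<in> S"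
  by (metis add_subgroup_def diff_0 diff_minus_eq_add)

lemma add_subgroup_scaleR_of_nat:
  fixes x :: "'a::real_vector"
  assumes "add_subgroup S" "x \<in> S"
  shows "real k *\<^sub>R x \<in> S"
proof (induction k)
  case 0
  then show ?case using assms(1) by (simp add: add_subgroup_def)
next
  case (Suc k)
  then show ?case using add_subgroup_add[OF assms(1) assms(2) Suc] by (simp add: scaleR_add_left)
qed

lemma dense_image_approachable:
  assumes "closure (p ` S) = UNIV" "e > 0"
  obtains s where "s \<in> S" "norm (p s - y) < e"
  using closure_approachableD[of y "p ` S" e] assms by (auto simp: dist_norm norm_minus_commute)

lemma dense_subgroup_decompose:
  fixes p :: "'a::real_normed_vector \<Rightarrow> 'b::real_normed_vector"
  assumes S: "add_subgroup S" and p: "linear p" and dense: "closure (p ` S) = UNIV"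
    and "\<delta> > 0" and l: "l \<in> S" "norm (p l) < real k * \<delta>"
  obtains a b where "a \<in> S" "b \<in> S" "norm (p a) < \<delta>" "norm (p b) < \<delta>"
    "l = a + real (Suc k) *\<^sub>R b"
proof -
  define n where "n = real (Suc k)"
  have "n > 0" by (simp add: n_def)
  then obtain b where b: "b \<in> S" "norm (p b - p l /\<^sub>R n) < \<delta> / n"
    using dense_image_approachable[OF dense] \<open>\<delta> > 0\<close> by (metis divide_pos_pos)
  define a where "a = l - n *\<^sub>R b"
  have "a \<in> S"
    unfolding a_def n_def using add_subgroup_diff add_subgroup_scaleR_of_nat S b(1) l(1) by blast
  moreover have "norm (p a) < \<delta>"
  proof -
    have "p a = - n *\<^sub>R (p b - p l /\<^sub>R n)"
      using \<open>n > 0\<close> by (simp add: a_def linear_diff[OF p] linear_scale[OF p] algebra_simps)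
    then have "norm (p a) = n * norm (p b - p l /\<^sub>R n)"
      using \<open>n > 0\<close> by simp
    also have "\<dots> < n * (\<delta> / n)"
      using b(2) \<open>n > 0\<close> by (rule mult_strict_left_mono)
    finally show ?thesis using \<open>n > 0\<close> by simp
  qed
  moreover have "norm (p b) < \<delta>"
  proof -
    have "norm (p b) \<le> norm (p b - p l /\<^sub>R n) + norm (p l) / n"
      using norm_triangle_ineq[of "p b - p l /\<^sub>R n" "p l /\<^sub>R n"] \<open>n > 0\<close> by (simp add: divide_inverse_commute)
    also have "\<dots> < \<delta> / n + real k * \<delta> / n"
      using b(2) l(2) \<open>n > 0\<close> by (simp add: add_strict_mono divide_strict_right_mono)
    also have "\<dots> = n * \<delta> / n"
      by (simp add: n_def add_divide_distrib[symmetric] algebra_simps)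
    also have "\<dots> = \<delta>"
      using \<open>n > 0\<close> by simp
    finally show ?thesis .
  qed
  ultimately show ?thesis using that b(1) by (simp add: a_def n_def)
qed

lemma dense_image_window_pair:
  fixes p :: "'a::real_normed_vector \<Rightarrow> 'b::real_normed_vector"
  assumes dense: "closure (p ` S) = UNIV" and p: "linear p"
    and window: "ball c (2 * \<delta>) \<subseteq> \<Omega>" and l: "norm (p l) < \<delta>"
  obtains y where "y \<in> S" "p y \<in> \<Omega>" "p (y + l) \<in> \<Omega>"
proof -
  have "\<delta> > 0" using l norm_ge_zero[of "p l"] by linarith
  then obtain y where y: "y \<in> S" "norm (p y - c) < \<delta>"
    using dense_image_approachable[OF dense] by blast
  have "norm (p (y + l) - c) \<le> norm (p y - c) + norm (p l)"
    using norm_triangle_ineq[of "p y - c" "p l"] by (simp add: linear_add[OF p] algebra_simps)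
  then have "p (y + l) \<in> ball c (2 * \<delta>)" "p y \<in> ball c (2 * \<delta>)"
    using y(2) l \<open>\<delta> > 0\<close> by (simp_all add: dist_norm norm_minus_commute)
  then show ?thesis using that y(1) window by blast
qed

lemma dense_subgroup_generated_by_small:
  fixes p :: "'a::real_normed_vector \<Rightarrow> 'b::real_normed_vector"
  assumes S: "add_subgroup S" and T: "add_subgroup T" and p: "linear p"
    and dense: "closure (p ` S) = UNIV" and "\<delta> > 0"
    and small: "\<And>s. s \<in> S \<Longrightarrow> norm (p s) < \<delta> \<Longrightarrow> s \<in> T" and "l \<in> S"
  shows "l \<in> T"
proof -
  obtain k :: nat where "norm (p l) / \<delta> < real k"
    using reals_Archimedean2 by blast
  then have "norm (p l) < real k * \<delta>"
    using \<open>\<delta> > 0\<close> by (simp add: divide_less_eq)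
  then obtain a b where "a \<in> S" "b \<in> S" "norm (p a) < \<delta>" "norm (p b) < \<delta>"
    and "l = a + real (Suc k) *\<^sub>R b"
    using dense_subgroup_decompose[OF S p dense \<open>\<delta> > 0\<close> \<open>l \<in> S\<close>] by blast
  then show ?thesis
    using small add_subgroup_add[OF T] add_subgroup_scaleR_of_nat[OF T] by metis
qed

lemma dense_subgroup_bound_extends:
  fixes p :: "'a::real_normed_vector \<Rightarrow> 'b::real_normed_vector"
    and w :: "'a \<Rightarrow> 'c::real_normed_vector"
  assumes S: "add_subgroup S" and p: "linear p" and dense: "closure (p ` S) = UNIV"
    and w: "linear w" and "\<delta> > 0"
    and small: "\<And>s. s \<in> S \<Longrightarrow> norm (p s) < \<delta> \<Longrightarrow> norm (w s) \<le> K"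
    and l: "l \<in> S" "norm (p l) < real k * \<delta>"
  shows "norm (w l) \<le> real (k + 2) * K"
proof -
  obtain a b where ab: "a \<in> S" "b \<in> S" "norm (p a) < \<delta>" "norm (p b) < \<delta>"
    and l_eq: "l = a + real (Suc k) *\<^sub>R b"
    using dense_subgroup_decompose[OF S p dense \<open>\<delta> > 0\<close> l] by blast
  have "norm (w l) \<le> norm (w a) + real (Suc k) * norm (w b)"
    using norm_triangle_ineq[of "w a" "real (Suc k) *\<^sub>R w b"]
    by (simp add: l_eq linear_add[OF w] linear_scale[OF w])
  also have "\<dots> \<le> K + real (Suc k) * K"
    using small ab by (intro add_mono mult_left_mono) auto
  finally show ?thesis by (simp add: algebra_simps)
qed

lemma dense_subgroup_vanishing_on_kernel:
  fixes p :: "'a::euclidean_space \<Rightarrow> 'b::real_normed_vector"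
    and w :: "'a \<Rightarrow> 'c::real_normed_vector"
  assumes S: "add_subgroup S" and net: "\<And>x. \<exists>s\<in>S. norm (x - s) \<le> D"
    and p: "linear p" and dense: "closure (p ` S) = UNIV"
    and w: "linear w" and "\<delta> > 0"
    and small: "\<And>s. s \<in> S \<Longrightarrow> norm (p s) < \<delta> \<Longrightarrow> norm (w s) \<le> K"
    and "p x = 0"
  shows "w x = 0"
proof (rule ccontr)
  assume "w x \<noteq> 0"
  txt \<open>Every N x is within D of some s \<in> S, and p s stays bounded since p x = 0; so the
    bound on w near the kernel gives N \<parallel>w x\<parallel> \<le> const for all N.\<close>
  obtain P where "P > 0" and P: "\<And>y. norm (p y) \<le> P * norm y"
    using linear_bounded_pos[OF p] by blast
  obtain W where "W > 0" and W: "\<And>y. norm (w y) \<le> W * norm y"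
    using linear_bounded_pos[OF w] by blast
  obtain k :: nat where "P * D / \<delta> < real k"
    using reals_Archimedean2 by blast
  then have k: "P * D < real k * \<delta>"
    using \<open>\<delta> > 0\<close> by (simp add: divide_less_eq)
  have multiple_bounded: "real N * norm (w x) \<le> real (k + 2) * K + W * D" for N :: nat
  proof -
    obtain s where "s \<in> S" and s: "norm (real N *\<^sub>R x - s) \<le> D"
      using net by blast
    have "p s = - p (real N *\<^sub>R x - s)"
      using \<open>p x = 0\<close> by (simp add: linear_diff[OF p] linear_scale[OF p])
    then have "norm (p s) \<le> P * D"
      using P[of "real N *\<^sub>R x - s"] s \<open>P > 0\<close> by (metis norm_minus_cancel mult_left_mono less_imp_le order_trans)
    then have "norm (w s) \<le> real (k + 2) * K"
      using dense_subgroup_bound_extends[OF S p dense w \<open>\<delta> > 0\<close> small \<open>s \<in> S\<close>] k by simp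
    moreover have "norm (w (real N *\<^sub>R x - s)) \<le> W * D"
      using W[of "real N *\<^sub>R x - s"] s \<open>W > 0\<close> by (meson mult_left_mono less_imp_le order_trans)
    moreover have "real N *\<^sub>R w x = w s + w (real N *\<^sub>R x - s)"
      by (simp add: linear_diff[OF w] linear_scale[OF w])
    ultimately show ?thesis
      using norm_triangle_ineq[of "w s" "w (real N *\<^sub>R x - s)"] by (metis add_mono norm_scaleR abs_of_nat order_trans)
  qed
  obtain N :: nat where "(real (k + 2) * K + W * D) / norm (w x) < real N"
    using reals_Archimedean2 by blast
  then show False
    using multiple_bounded[of N] \<open>w x \<noteq> 0\<close> by (simp add: divide_less_eq)
qed

lemma add_subgroup_int_vectors: "add_subgroup int_vectors"
  by (auto simp: add_subgroup_def int_vectors_def)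

lemma axis_in_int_vectors: "axis k 1 \<in> int_vectors"
  by (simp add: int_vectors_def axis_def)

lemma int_matrix_mult_int_vectors:
  assumes "\<forall>i j. C $ i $ j \<in> \<int>" "z \<in> int_vectors"
  shows "C *v z \<in> int_vectors"
  using assms unfolding int_vectors_def matrix_vector_mult_def
  by (auto intro!: Ints_sum Ints_mult)

lemma int_vectors_near: "\<exists>z\<in>int_vectors. norm (x - z) \<le> real CARD('k)"
  for x :: "real ^ 'k::finite"
proof
  let ?z = "\<chi> i. of_int \<lfloor>x $ i\<rfloor> :: real ^ 'k"
  show "?z \<in> int_vectors" by (simp add: int_vectors_def)
  have "norm (x - ?z) \<le> (\<Sum>i\<in>UNIV. \<bar>(x - ?z) $ i\<bar>)"
    by (rule norm_le_l1_cart)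
  also have "\<dots> \<le> (\<Sum>i\<in>(UNIV :: 'k set). 1)"
  proof (rule sum_mono)
    fix i
    show "\<bar>(x - ?z) $ i\<bar> \<le> 1" by simp linarith
  qed
  finally show "norm (x - ?z) \<le> real CARD('k)" by simp
qed

lemma linear_lift_to_int_matrix:
  fixes f g :: "real ^ 'k::finite \<Rightarrow> 'b::real_vector"
  assumes f: "linear f" and g: "linear g"
    and lift: "\<And>z. z \<in> int_vectors \<Longrightarrow> \<exists>u\<in>int_vectors. g u = f z"
  obtains C :: "real ^ 'k ^ 'k" where "\<forall>i j. C $ i $ j \<in> \<int>" "\<And>z. g (C *v z) = f z"
proof -
  obtain u where u: "\<And>k. u k \<in> int_vectors" "\<And>k. g (u k) = f (axis k 1)"
    using lift[OF axis_in_int_vectors] by metis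
  define C where "C = (\<chi> i k. u k $ i)"
  have "\<forall>i j. C $ i $ j \<in> \<int>"
    using u(1) by (simp add: C_def int_vectors_def)
  moreover have "(\<lambda>z. g (C *v z)) = f"
  proof (rule linear_eq_stdbasis)
    show "linear (\<lambda>z. g (C *v z))"
      using linear_compose[OF matrix_vector_mul_linear g] by (simp add: o_def)
    fix b :: "real ^ 'k" assume "b \<in> Basis"
    then obtain k where "b = axis k 1" by (auto simp: Basis_vec_def)
    moreover have "C *v axis k 1 = u k"
      by (simp add: matrix_vector_mult_basis column_def C_def vec_eq_iff)
    ultimately show "g (C *v b) = f b" using u(2) by simp
  qed (rule f)
  ultimately show ?thesis using that by metis
qed

lemma linear_factor_through_surj:
  fixes f :: "real ^ 'a::finite \<Rightarrow> real ^ 'c::finite" and g :: "real ^ 'a \<Rightarrow> real ^ 'b::finite"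
  assumes f: "linear f" and g: "linear g" "surj g" and ker: "\<And>x. g x = 0 \<Longrightarrow> f x = 0"
  obtains B where "\<And>x. B *v g x = f x"
proof -
  obtain h where h: "linear h" "g \<circ> h = id"
    using linear_surjective_right_inverse[OF g] by blast
  have "matrix (f \<circ> h) *v g x = f x" for x
  proof -
    have "g (h (g x) - x) = 0"
      using h by (simp add: linear_diff[OF g(1)] pointfree_idE)
    then have "f (h (g x)) = f x"
      using ker linear_diff[OF f] by (metis eq_iff_diff_eq_0)
    then show ?thesis
      using linear_compose[OF h(1) f] by simp
  qed
  then show ?thesis using that by blast
qed

lemma linear_pi_par: "linear pi_par"
  by (rule linearI) (simp_all add: pi_par_def vec_eq_iff)

lemma linear_pi_perp: "linear pi_perp"
  by (rule linearI) (simp_all add: pi_perp_def vec_eq_iff)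

lemma surj_pi_perp: "surj pi_perp"
  by (rule surjI[of _ "\<lambda>v. \<chi> j. case j of Inl _ \<Rightarrow> 0 | Inr b \<Rightarrow> v $ b"])
    (simp add: pi_perp_def vec_eq_iff)

lemma pi_par_pi_perp_eqI:
  fixes x y :: "real ^ ('n::finite + 'm::finite)"
  assumes "pi_par x = pi_par y" "pi_perp x = pi_perp y"
  shows "x = y"
proof (rule vec_eq_iff[THEN iffD2], rule allI)
  fix j :: "'n + 'm"
  show "x $ j = y $ j"
    using assms by (cases j) (simp_all add: pi_par_def pi_perp_def vec_eq_iff)
qed

lemma sum_UNIV_Plus:
  fixes f :: "('a::finite + 'b::finite) \<Rightarrow> 'c::comm_monoid_add"
  shows "sum f UNIV = sum (\<lambda>a. f (Inl a)) UNIV + sum (\<lambda>b. f (Inr b)) UNIV"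
  using sum.Plus[of "UNIV :: 'a set" "UNIV :: 'b set" f] by (simp add: comp_def)

lemma pi_par_block_diag: "pi_par (block_diag A B *v y) = A *v pi_par y"
  and pi_perp_block_diag: "pi_perp (block_diag A B *v y) = B *v pi_perp y"
  by (simp_all add: vec_eq_iff pi_par_def pi_perp_def block_diag_def matrix_vector_mult_def sum_UNIV_Plus)

lemma block_diag_intertwines_iff:
  "block_diag A B ** L = L ** C \<longleftrightarrow>
    (\<forall>z. pi_par (L *v (C *v z)) = A *v pi_par (L *v z)) \<and>
    (\<forall>z. pi_perp (L *v (C *v z)) = B *v pi_perp (L *v z))"
  unfolding matrix_eq matrix_vector_mul_assoc[symmetric]
proof (intro iffI conjI allI)
  fix z
  assume eq: "\<forall>x. block_diag A B *v (L *v x) = L *v (C *v x)"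
  show "pi_par (L *v (C *v z)) = A *v pi_par (L *v z)"
    using eq pi_par_block_diag by metis
  show "pi_perp (L *v (C *v z)) = B *v pi_perp (L *v z)"
    using eq pi_perp_block_diag by metis
next
  fix x
  assume "(\<forall>z. pi_par (L *v (C *v z)) = A *v pi_par (L *v z)) \<and>
    (\<forall>z. pi_perp (L *v (C *v z)) = B *v pi_perp (L *v z))"
  then show "block_diag A B *v (L *v x) = L *v (C *v x)"
    by (intro pi_par_pi_perp_eqI) (simp_all only: pi_par_block_diag pi_perp_block_diag)
qed

lemma linear_pi_par_mult: "linear (\<lambda>z. pi_par (M *v z))"
  using linear_compose[OF matrix_vector_mul_linear linear_pi_par] by (simp add: o_def)

lemma linear_pi_perp_mult: "linear (\<lambda>z. pi_perp (M *v z))"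
  using linear_compose[OF matrix_vector_mul_linear linear_pi_perp] by (simp add: o_def)

lemma linear_pi_perp_mult_mult: "linear (\<lambda>z. pi_perp (M *v (N *v z)))"
  using linear_compose[OF matrix_vector_mul_linear linear_pi_perp_mult] by (simp add: o_def)

lemma lattice_of_eq_image: "lattice_of L = (\<lambda>z. L *v z) ` int_vectors"
  by (auto simp: lattice_of_def)

locale cps_linear_endomorphism =
  fixes L :: "real ^ ('n::finite + 'm::finite) ^ ('n + 'm)"
    and \<Omega> :: "(real ^ 'm) set"
    and A :: "real ^ 'n ^ 'n"
  assumes generic: "generic_cps L"
    and bounded_window: "bounded \<Omega>"
    and window_interior: "interior \<Omega> \<noteq> {}"
    and invariant: "(\<lambda>x. A *v x) ` cps_set L \<Omega> \<subseteq> cps_set L \<Omega>"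
begin

lemma invertible_L: "invertible L"
  using generic by (simp add: generic_cps_def)

lemma dense_pi_perp_lattice: "closure ((\<lambda>z. pi_perp (L *v z)) ` int_vectors) = UNIV"
  using generic by (simp add: generic_cps_def lattice_of_eq_image image_image)

lemma surj_pi_perp_lattice: "surj (\<lambda>z. pi_perp (L *v z))"
proof -
  obtain L' where L': "L ** L' = mat 1"
    using invertible_L by (auto simp: invertible_def)
  have "surj (\<lambda>z. L *v z)"
    by (rule surjI[of _ "\<lambda>x. L' *v x"]) (simp add: matrix_vector_mul_assoc L')
  then show ?thesis
    using comp_surj[OF _ surj_pi_perp] by (simp add: comp_def)
qed

lemma lattice_coordinates_eqI:
  assumes "u \<in> int_vectors" "v \<in> int_vectors" "pi_par (L *v u) = pi_par (L *v v)"
  shows "u = v"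
proof -
  obtain L' where L': "L' ** L = mat 1"
    using invertible_L by (auto simp: invertible_def)
  have "L *v u = L *v v"
    using generic assms by (auto simp: generic_cps_def lattice_of_eq_image inj_on_def)
  then have "L' *v (L *v u) = L' *v (L *v v)" by simp
  then show ?thesis by (simp add: matrix_vector_mul_assoc L')
qed

lemma window_pairs:
  obtains \<delta> where "\<delta> > 0"
    "\<And>z. z \<in> int_vectors \<Longrightarrow> norm (pi_perp (L *v z)) < \<delta> \<Longrightarrow>
      \<exists>y\<in>int_vectors. pi_perp (L *v y) \<in> \<Omega> \<and> pi_perp (L *v (y + z)) \<in> \<Omega>"
proof -
  obtain c e where "e > 0" "ball c e \<subseteq> \<Omega>"
    using window_interior by (meson ex_in_conv mem_interior)
  then have ball: "ball c (2 * (e / 2)) \<subseteq> \<Omega>" by simp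
  show ?thesis
  proof (rule that)
    show "e / 2 > 0" using \<open>e > 0\<close> by simp
    fix z assume "norm (pi_perp (L *v z)) < e / 2"
    from dense_image_window_pair[OF dense_pi_perp_lattice linear_pi_perp_mult ball this]
    show "\<exists>y\<in>int_vectors. pi_perp (L *v y) \<in> \<Omega> \<and> pi_perp (L *v (y + z)) \<in> \<Omega>"
      by blast
  qed
qed

lemma window_point_image:
  assumes "z \<in> int_vectors" "pi_perp (L *v z) \<in> \<Omega>"
  shows "\<exists>u\<in>int_vectors. pi_par (L *v u) = A *v pi_par (L *v z) \<and> pi_perp (L *v u) \<in> \<Omega>"
proof -
  have "A *v pi_par (L *v z) \<in> cps_set L \<Omega>"
    using assms invariant by (force simp: cps_set_def lattice_of_def)
  then show ?thesis by (auto simp: cps_set_def lattice_of_def)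
qed

lemma lattice_point_image:
  assumes "z \<in> int_vectors"
  shows "\<exists>u\<in>int_vectors. pi_par (L *v u) = A *v pi_par (L *v z)"
proof -
  let ?T = "{z. \<exists>u\<in>int_vectors. pi_par (L *v u) = A *v pi_par (L *v z)}"
  have "add_subgroup ?T"
    unfolding add_subgroup_def
  proof (intro conjI ballI)
    show "0 \<in> ?T"
      using add_subgroup_int_vectors
      by (auto simp: add_subgroup_def linear_0[OF linear_pi_par] intro!: bexI[of _ 0])
    fix x y assume "x \<in> ?T" "y \<in> ?T"
    then obtain u v where uv: "u \<in> int_vectors" "v \<in> int_vectors"
      "pi_par (L *v u) = A *v pi_par (L *v x)" "pi_par (L *v v) = A *v pi_par (L *v y)"
      by blast
    then have "pi_par (L *v (u - v)) = A *v pi_par (L *v (x - y))"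
      by (simp add: matrix_vector_mult_diff_distrib linear_diff[OF linear_pi_par])
    then show "x - y \<in> ?T"
      using add_subgroup_diff[OF add_subgroup_int_vectors uv(1,2)] by blast
  qed
  obtain \<delta> where "\<delta> > 0" and window: "\<And>z. z \<in> int_vectors \<Longrightarrow> norm (pi_perp (L *v z)) < \<delta> \<Longrightarrow>
      \<exists>y\<in>int_vectors. pi_perp (L *v y) \<in> \<Omega> \<and> pi_perp (L *v (y + z)) \<in> \<Omega>"
    using window_pairs by blast
  have "z \<in> ?T" if z: "z \<in> int_vectors" "norm (pi_perp (L *v z)) < \<delta>" for z
  proof -
    obtain y where y: "y \<in> int_vectors" "pi_perp (L *v y) \<in> \<Omega>" "pi_perp (L *v (y + z)) \<in> \<Omega>"
      using window z by blast
    have "y \<in> ?T" "y + z \<in> ?T"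
      using window_point_image[OF y(1,2)]
        window_point_image[OF add_subgroup_add[OF add_subgroup_int_vectors y(1) z(1)] y(3)]
      by blast+
    then have "(y + z) - y \<in> ?T"
      using \<open>add_subgroup ?T\<close> add_subgroup_diff by blast
    then show ?thesis by simp
  qed
  from dense_subgroup_generated_by_small[OF add_subgroup_int_vectors \<open>add_subgroup ?T\<close>
      linear_pi_perp_mult dense_pi_perp_lattice \<open>\<delta> > 0\<close> this assms]
  show ?thesis by simp
qed

lemma projected_lattice_invariant:
  "(\<lambda>x. A *v x) ` (pi_par ` lattice_of L) \<subseteq> pi_par ` lattice_of L"
proof
  fix x assume "x \<in> (\<lambda>x. A *v x) ` (pi_par ` lattice_of L)"
  then obtain z where "z \<in> int_vectors" "x = A *v pi_par (L *v z)"
    by (auto simp: lattice_of_eq_image)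
  then obtain u where "u \<in> int_vectors" "x = pi_par (L *v u)"
    using lattice_point_image by metis
  then show "x \<in> pi_par ` lattice_of L"
    by (auto simp: lattice_of_eq_image)
qed

lemma exists_int_matrix:
  obtains C where "\<forall>i j. C $ i $ j \<in> \<int>" "\<And>z. pi_par (L *v (C *v z)) = A *v pi_par (L *v z)"
proof -
  have "linear (\<lambda>z. A *v pi_par (L *v z))"
    using linear_compose[OF linear_pi_par_mult matrix_vector_mul_linear] by (simp add: o_def)
  from linear_lift_to_int_matrix[OF this linear_pi_par_mult lattice_point_image]
  show ?thesis using that by blast
qed

lemma int_matrix_unique:
  assumes "\<forall>i j. C $ i $ j \<in> \<int>" "\<And>z. pi_par (L *v (C *v z)) = A *v pi_par (L *v z)"
    and "\<forall>i j. C' $ i $ j \<in> \<int>" "\<And>z. pi_par (L *v (C' *v z)) = A *v pi_par (L *v z)"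
  shows "C' = C"
proof -
  have "C' *v axis k 1 = C *v axis k 1" for k
    using assms by (intro lattice_coordinates_eqI int_matrix_mult_int_vectors axis_in_int_vectors) auto
  then show ?thesis
    by (simp add: matrix_vector_mult_basis column_def vec_eq_iff)
qed

lemma perp_matrix_unique:
  assumes "block_diag A B ** L = L ** C" "block_diag A B' ** L = L ** C"
  shows "B' = B"
proof -
  have "B' *v pi_perp (L *v z) = B *v pi_perp (L *v z)" for z
    using assms by (simp add: block_diag_intertwines_iff)
  then show ?thesis
    using surjD[OF surj_pi_perp_lattice] by (metis matrix_eq)
qed

context
  fixes C :: "real ^ ('n + 'm) ^ ('n + 'm)"
  assumes C_int: "\<forall>i j. C $ i $ j \<in> \<int>"
    and C_par: "\<And>z. pi_par (L *v (C *v z)) = A *v pi_par (L *v z)"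
begin

lemma pi_perp_window_invariant:
  assumes "z \<in> int_vectors" "pi_perp (L *v z) \<in> \<Omega>"
  shows "pi_perp (L *v (C *v z)) \<in> \<Omega>"
proof -
  obtain u where u: "u \<in> int_vectors" "pi_par (L *v u) = A *v pi_par (L *v z)" "pi_perp (L *v u) \<in> \<Omega>"
    using window_point_image[OF assms] by blast
  have "C *v z = u"
    using u C_par int_matrix_mult_int_vectors[OF C_int assms(1)] by (intro lattice_coordinates_eqI) auto
  then show ?thesis using u(3) by simp
qed

lemma pi_perp_kernel_invariant:
  assumes "pi_perp (L *v x) = 0"
  shows "pi_perp (L *v (C *v x)) = 0"
proof -
  obtain \<delta> where "\<delta> > 0" and window: "\<And>z. z \<in> int_vectors \<Longrightarrow> norm (pi_perp (L *v z)) < \<delta> \<Longrightarrow>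
      \<exists>y\<in>int_vectors. pi_perp (L *v y) \<in> \<Omega> \<and> pi_perp (L *v (y + z)) \<in> \<Omega>"
    using window_pairs by blast
  obtain K where K: "\<And>v. v \<in> \<Omega> \<Longrightarrow> norm v \<le> K"
    using bounded_window by (auto simp: bounded_iff)
  have "norm (pi_perp (L *v (C *v z))) \<le> 2 * K"
    if z: "z \<in> int_vectors" "norm (pi_perp (L *v z)) < \<delta>" for z
  proof -
    obtain y where y: "y \<in> int_vectors" "pi_perp (L *v y) \<in> \<Omega>" "pi_perp (L *v (y + z)) \<in> \<Omega>"
      using window z by blast
    have "pi_perp (L *v (C *v (y + z))) = pi_perp (L *v (C *v y)) + pi_perp (L *v (C *v z))"
      by (simp add: matrix_vector_right_distrib linear_add[OF linear_pi_perp])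
    then have "norm (pi_perp (L *v (C *v z)))
        \<le> norm (pi_perp (L *v (C *v (y + z)))) + norm (pi_perp (L *v (C *v y)))"
      by (metis add_diff_cancel_left' norm_triangle_ineq4)
    moreover have "norm (pi_perp (L *v (C *v (y + z)))) \<le> K" "norm (pi_perp (L *v (C *v y))) \<le> K"
      using K pi_perp_window_invariant y add_subgroup_add[OF add_subgroup_int_vectors y(1) z(1)] by auto
    ultimately show ?thesis by linarith
  qed
  from dense_subgroup_vanishing_on_kernel[OF add_subgroup_int_vectors int_vectors_near
      linear_pi_perp_mult dense_pi_perp_lattice linear_pi_perp_mult_mult \<open>\<delta> > 0\<close> this assms]
  show ?thesis by simp
qed

lemma exists_perp_matrix:
  obtains B where "block_diag A B ** L = L ** C"
proof -
  obtain B where "\<And>z. pi_perp (L *v (C *v z)) = B *v pi_perp (L *v z)"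
    using linear_factor_through_surj[OF linear_pi_perp_mult_mult linear_pi_perp_mult
        surj_pi_perp_lattice pi_perp_kernel_invariant]
    by metis
  then show ?thesis
    using that C_par unfolding block_diag_intertwines_iff by blast
qed

end

end

theorem proposition2:
  fixes L :: "real ^ ('n::finite + 'm::finite) ^ ('n + 'm)"
    and \<Omega> :: "(real ^ 'm) set"
    and A :: "real ^ 'n ^ 'n"
  assumes generic: "generic_cps L"
    and bdd: "bounded \<Omega>"
    and reg: "closure (interior \<Omega>) = closure \<Omega>"
    and ne: "closure \<Omega> \<noteq> {}"
    and inv: "(\<lambda>x. A *v x) ` cps_set L \<Omega> \<subseteq> cps_set L \<Omega>"
  shows "(\<lambda>x. A *v x) ` (pi_par ` lattice_of L) \<subseteq> pi_par ` lattice_of L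
    \<and> (\<exists>C B. (\<forall>i j. C $ i $ j \<in> \<int>) \<and> block_diag A B ** L = L ** C
        \<and> (\<forall>C' B'. (\<forall>i j. C' $ i $ j \<in> \<int>) \<and> block_diag A B' ** L = L ** C'
                    \<longrightarrow> C' = C \<and> B' = B))"
proof -
  have "interior \<Omega> \<noteq> {}"
    using reg ne by (metis closure_empty)
  then interpret cps_linear_endomorphism L \<Omega> A
    using generic bdd inv by unfold_locales
  obtain C where C_int: "\<forall>i j. C $ i $ j \<in> \<int>"
    and C_par: "\<And>z. pi_par (L *v (C *v z)) = A *v pi_par (L *v z)"
    using exists_int_matrix by blast
  obtain B where B: "block_diag A B ** L = L ** C"
    using exists_perp_matrix[OF C_int C_par] by blast
  have "C' = C \<and> B' = B"
    if "\<forall>i j. C' $ i $ j \<in> \<int>" "block_diag A B' ** L = L ** C'" for C' B'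
  proof -
    have "C' = C"
      using int_matrix_unique[OF C_int C_par] that by (simp add: block_diag_intertwines_iff)
    then show ?thesis
      using perp_matrix_unique[OF B] that by simp
  qed
  then show ?thesis
    using projected_lattice_invariant C_int B by blast
qed

end
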